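(* Let $\mathcal{C}$ be a strict monoidal category with a pre-braiding $\sigma$, and let $\mathcal{C}_\sigma$ be the subcategory defined below. Then $\mathcal{C}_\sigma$ is a braided monoidal category with braiding $\sigma$.
   Context: A pre-braiding is a family of morphisms $\sigma_{A,B}\colon A\otimes B\to B\otimes A$, $A,B\in\mathrm{Ob}\,\mathcal{C}$, satisfying the Yang–Baxter equation $(\mathrm{id}_C\otimes\sigma_{A,B})(\sigma_{A,C}\otimes\mathrm{id}_B)(\mathrm{id}_A\otimes\sigma_{B,C})=(\sigma_{B,C}\otimes\mathrm{id}_A)(\mathrm{id}_B\otimes\sigma_{A,C})(\sigma_{A,B}\otimes\mathrm{id}_C)$ and the hexagon identities $\sigma_{A\otimes B,C}=(\sigma_{A,C}\otimes\mathrm{id}_B)(\mathrm{id}_A\otimes\sigma_{B,C})$, $\sigma_{C,A\otimes B}=(\mathrm{id}_A\otimes\sigma_{C,B})(\sigma_{C,A}\otimes\mathrm{id}_B)$, but not necessarily natural. A braiding is a pre-braiding that is natural: $(g\otimes f)\circ\sigma_{A,B}=\sigma_{A',B'}\circ(f\otimes g)$ for all morphisms $f\colon A\to A'$, $g\colon B\to B'$. $\mathcal{C}_\sigma$ has the same objects as $\mathcal{C}$, and $f\in\mathrm{Hom}_\mathcal{C}(A,B)$ is a morphism of $\mathcal{C}_\sigma$ iff $\sigma_{B,C}\circ(f\otimes\mathrm{id}_C)=(\mathrm{id}_C\otimes f)\circ\sigma_{A,C}$ and $(f\otimes\mathrm{id}_C)\circ\sigma_{C,A}=\sigma_{C,B}\circ(\mathrm{id}_C\otimes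 f)$ for all $C\in\mathrm{Ob}\,\mathcal{C}$. *)

theory Defs
  imports Main
begin

text \<open>Categories are given by a set of objects Obj, a set of arrows Arr,
  domain and codomain maps, a composition cmp g f (meaning g after f,
  required only for composable arrows) and identities ident.\<close>

locale category =
  fixes Obj :: "'o set" and Arr :: "'m set"
    and dm :: "'m \<Rightarrow> 'o" and cd :: "'m \<Rightarrow> 'o"
    and cmp :: "'m \<Rightarrow> 'm \<Rightarrow> 'm" and ident :: "'o \<Rightarrow> 'm"
  assumes dom_in: "f \<in> Arr \<Longrightarrow> dm f \<in> Obj"
    and cod_in: "f \<in> Arr \<Longrightarrow> cd f \<in> Obj"
    and ident_arr: "A \<in> Obj \<Longrightarrow> ident A \<in> Arr"
    and ident_dom: "A \<in> Obj \<Longrightarrow> dm (ident A) = A"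
    and ident_cod: "A \<in> Obj \<Longrightarrow> cd (ident A) = A"
    and comp_arr: "\<lbrakk>f \<in> Arr; g \<in> Arr; cd f = dm g\<rbrakk> \<Longrightarrow> cmp g f \<in> Arr"
    and comp_dom: "\<lbrakk>f \<in> Arr; g \<in> Arr; cd f = dm g\<rbrakk> \<Longrightarrow> dm (cmp g f) = dm f"
    and comp_cod: "\<lbrakk>f \<in> Arr; g \<in> Arr; cd f = dm g\<rbrakk> \<Longrightarrow> cd (cmp g f) = cd g"
    and comp_ident_left: "f \<in> Arr \<Longrightarrow> cmp (ident (cd f)) f = f"
    and comp_ident_right: "f \<in> Arr \<Longrightarrow> cmp f (ident (dm f)) = f"
    and comp_assoc: "\<lbrakk>f \<in> Arr; g \<in> Arr; h \<in> Arr; cd f = dm g; cd g = dm h\<rbrakk>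
                      \<Longrightarrow> cmp h (cmp g f) = cmp (cmp h g) f"

locale strict_monoidal_category = category Obj Arr dm cd cmp ident
  for Obj :: "'o set" and Arr :: "'m set"
    and dm :: "'m \<Rightarrow> 'o" and cd :: "'m \<Rightarrow> 'o"
    and cmp :: "'m \<Rightarrow> 'm \<Rightarrow> 'm" and ident :: "'o \<Rightarrow> 'm" +
  fixes tens :: "'o \<Rightarrow> 'o \<Rightarrow> 'o" and tensm :: "'m \<Rightarrow> 'm \<Rightarrow> 'm" and unit :: 'o
  assumes unit_in: "unit \<in> Obj"
    and tens_obj: "\<lbrakk>A \<in> Obj; B \<in> Obj\<rbrakk> \<Longrightarrow> tens A B \<in> Obj"
    and tensm_arr: "\<lbrakk>f \<in> Arr; g \<in> Arr\<rbrakk> \<Longrightarrow> tensm f g \<in> Arr"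
    and tensm_dom: "\<lbrakk>f \<in> Arr; g \<in> Arr\<rbrakk> \<Longrightarrow> dm (tensm f g) = tens (dm f) (dm g)"
    and tensm_cod: "\<lbrakk>f \<in> Arr; g \<in> Arr\<rbrakk> \<Longrightarrow> cd (tensm f g) = tens (cd f) (cd g)"
    and tensm_ident: "\<lbrakk>A \<in> Obj; B \<in> Obj\<rbrakk> \<Longrightarrow> tensm (ident A) (ident B) = ident (tens A B)"
    and tensm_comp: "\<lbrakk>f \<in> Arr; g \<in> Arr; f' \<in> Arr; g' \<in> Arr; cd f = dm g; cd f' = dm g'\<rbrakk>
                      \<Longrightarrow> tensm (cmp g f) (cmp g' f') = cmp (tensm g g') (tensm f f')"
    and tens_assoc: "\<lbrakk>A \<in> Obj; B \<in> Obj; C \<in> Obj\<rbrakk> \<Longrightarrow> tens (tens A B) C = tens A (tens B C)"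
    and tens_unit_left: "A \<in> Obj \<Longrightarrow> tens unit A = A"
    and tens_unit_right: "A \<in> Obj \<Longrightarrow> tens A unit = A"
    and tensm_assoc: "\<lbrakk>f \<in> Arr; g \<in> Arr; h \<in> Arr\<rbrakk> \<Longrightarrow> tensm (tensm f g) h = tensm f (tensm g h)"
    and tensm_unit_left: "f \<in> Arr \<Longrightarrow> tensm (ident unit) f = f"
    and tensm_unit_right: "f \<in> Arr \<Longrightarrow> tensm f (ident unit) = f"

text \<open>Pre-braiding: Yang-Baxter equation and the two hexagon identities (not necessarily natural).\<close>

locale pre_braiding = strict_monoidal_category Obj Arr dm cd cmp ident tens tensm unit
  for Obj :: "'o set" and Arr :: "'m set"
    and dm :: "'m \<Rightarrow> 'o" and cd :: "'m \<Rightarrow> 'o"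
    and cmp :: "'m \<Rightarrow> 'm \<Rightarrow> 'm" and ident :: "'o \<Rightarrow> 'm"
    and tens :: "'o \<Rightarrow> 'o \<Rightarrow> 'o" and tensm :: "'m \<Rightarrow> 'm \<Rightarrow> 'm" and unit :: 'o +
  fixes \<sigma> :: "'o \<Rightarrow> 'o \<Rightarrow> 'm"
  assumes sigma_arr: "\<lbrakk>A \<in> Obj; B \<in> Obj\<rbrakk> \<Longrightarrow> \<sigma> A B \<in> Arr"
    and sigma_dom: "\<lbrakk>A \<in> Obj; B \<in> Obj\<rbrakk> \<Longrightarrow> dm (\<sigma> A B) = tens A B"
    and sigma_cod: "\<lbrakk>A \<in> Obj; B \<in> Obj\<rbrakk> \<Longrightarrow> cd (\<sigma> A B) = tens B A"
    and yang_baxter: "\<lbrakk>A \<in> Obj; B \<in> Obj; C \<in> Obj\<rbrakk> \<Longrightarrow>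
        cmp (tensm (ident C) (\<sigma> A B)) (cmp (tensm (\<sigma> A C) (ident B)) (tensm (ident A) (\<sigma> B C)))
      = cmp (tensm (\<sigma> B C) (ident A)) (cmp (tensm (ident B) (\<sigma> A C)) (tensm (\<sigma> A B) (ident C)))"
    and hexagon1: "\<lbrakk>A \<in> Obj; B \<in> Obj; C \<in> Obj\<rbrakk> \<Longrightarrow>
        \<sigma> (tens A B) C = cmp (tensm (\<sigma> A C) (ident B)) (tensm (ident A) (\<sigma> B C))"
    and hexagon2: "\<lbrakk>A \<in> Obj; B \<in> Obj; C \<in> Obj\<rbrakk> \<Longrightarrow>
        \<sigma> C (tens A B) = cmp (tensm (ident A) (\<sigma> C B)) (tensm (\<sigma> C A) (ident B))"

locale braided_monoidal_category = pre_braiding Obj Arr dm cd cmp ident tens tensm unit \<sigma>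
  for Obj :: "'o set" and Arr :: "'m set"
    and dm :: "'m \<Rightarrow> 'o" and cd :: "'m \<Rightarrow> 'o"
    and cmp :: "'m \<Rightarrow> 'm \<Rightarrow> 'm" and ident :: "'o \<Rightarrow> 'm"
    and tens :: "'o \<Rightarrow> 'o \<Rightarrow> 'o" and tensm :: "'m \<Rightarrow> 'm \<Rightarrow> 'm" and unit :: 'o
    and \<sigma> :: "'o \<Rightarrow> 'o \<Rightarrow> 'm" +
  assumes natural: "\<lbrakk>f \<in> Arr; g \<in> Arr\<rbrakk> \<Longrightarrow>
        cmp (tensm g f) (\<sigma> (dm f) (dm g)) = cmp (\<sigma> (cd f) (cd g)) (tensm f g)"

definition C_sigma_Arr ::
  "'o set \<Rightarrow> 'm set \<Rightarrow> ('m \<Rightarrow> 'o) \<Rightarrow> ('m \<Rightarrow> 'o) \<Rightarrow> ('m \<Rightarrow> 'm \<Rightarrow> 'm) \<Rightarrow> ('o \<Rightarrow> 'm)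
    \<Rightarrow> ('m \<Rightarrow> 'm \<Rightarrow> 'm) \<Rightarrow> ('o \<Rightarrow> 'o \<Rightarrow> 'm) \<Rightarrow> 'm set" where
  "C_sigma_Arr Obj Arr dm cd cmp ident tensm \<sigma> =
     {f \<in> Arr. \<forall>C \<in> Obj.
        cmp (\<sigma> (cd f) C) (tensm f (ident C)) = cmp (tensm (ident C) f) (\<sigma> (dm f) C)
      \<and> cmp (tensm f (ident C)) (\<sigma> C (dm f)) = cmp (\<sigma> C (cd f)) (tensm (ident C) f)}"

end

theory Submission
  imports Defs
begin

text \<open>An arrow f lies in C_sigma iff sigma is natural with respect to f in each argument,
  the other argument being an identity. These naturality squares paste along composition and,
  since the hexagon identities split sigma at a tensor product into two whiskered copies, along
  tensor products too; expanding sigma A B by the hexagons turns its own naturality into the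
  Yang-Baxter equation. Full naturality on C_sigma follows by factoring
  f \<otimes> g = (id \<otimes> g)(f \<otimes> id) and pasting the two squares.\<close>

context category
begin

lemma subcategory:
  assumes "S \<subseteq> Arr"
    and "\<And>A. A \<in> Obj \<Longrightarrow> ident A \<in> S"
    and "\<And>f g. \<lbrakk>f \<in> S; g \<in> S; cd f = dm g\<rbrakk> \<Longrightarrow> cmp g f \<in> S"
  shows "category Obj S dm cd cmp ident"
  using assms by unfold_locales (auto intro: dom_in cod_in ident_dom ident_cod comp_dom comp_cod
      comp_ident_left comp_ident_right comp_assoc)

lemma paste_squares:
  assumes sq1: "cmp v1 h1 = cmp h1' v0" and sq2: "cmp v2 h2 = cmp h2' v1"
    and "h1 \<in> Arr" "h2 \<in> Arr" "h1' \<in> Arr" "h2' \<in> Arr" "v0 \<in> Arr" "v1 \<in> Arr" "v2 \<in> Arr"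
    and "cd h1 = dm h2" "cd h1 = dm v1" "cd h2 = dm v2"
    and "cd v0 = dm h1'" "cd v1 = dm h2'" "cd h1' = dm h2'"
  shows "cmp v2 (cmp h2 h1) = cmp (cmp h2' h1') v0"
proof -
  have "cmp v2 (cmp h2 h1) = cmp (cmp v2 h2) h1"
    using assms by (intro comp_assoc) auto
  also have "\<dots> = cmp h2' (cmp v1 h1)"
    unfolding sq2 using assms by (intro comp_assoc[symmetric]) auto
  also have "\<dots> = cmp (cmp h2' h1') v0"
    unfolding sq1 using assms by (intro comp_assoc) auto
  finally show ?thesis .
qed

end

context strict_monoidal_category
begin

lemmas typing = tensm_arr tensm_dom tensm_cod ident_arr ident_dom ident_cod
  comp_arr comp_dom comp_cod tens_obj dom_in cod_in

lemma monoidal_subcategory: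
  assumes "S \<subseteq> Arr"
    and "\<And>A. A \<in> Obj \<Longrightarrow> ident A \<in> S"
    and "\<And>f g. \<lbrakk>f \<in> S; g \<in> S; cd f = dm g\<rbrakk> \<Longrightarrow> cmp g f \<in> S"
    and "\<And>f g. \<lbrakk>f \<in> S; g \<in> S\<rbrakk> \<Longrightarrow> tensm f g \<in> S"
  shows "strict_monoidal_category Obj S dm cd cmp ident tens tensm unit"
proof (rule strict_monoidal_category.intro)
  show "category Obj S dm cd cmp ident"
    using assms(1-3) by (rule subcategory)
  show "strict_monoidal_category_axioms Obj S dm cd cmp ident tens tensm unit"
    using assms by unfold_locales (auto intro: unit_in tens_obj tensm_dom tensm_cod tensm_ident
        tensm_comp tens_assoc tens_unit_left tens_unit_right tensm_assoc tensm_unit_left tensm_unit_right)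
qed

lemma tensm_comp_snd_before:
  "\<lbrakk>f \<in> Arr; g \<in> Arr; h \<in> Arr; cd h = dm g\<rbrakk>
    \<Longrightarrow> tensm f (cmp g h) = cmp (tensm (ident (cd f)) g) (tensm f h)"
  using tensm_comp[of f "ident (cd f)" h g] by (simp add: typing comp_ident_left)

lemma tensm_comp_snd_after:
  "\<lbrakk>f \<in> Arr; g \<in> Arr; h \<in> Arr; cd h = dm g\<rbrakk>
    \<Longrightarrow> tensm f (cmp g h) = cmp (tensm f g) (tensm (ident (dm f)) h)"
  using tensm_comp[of "ident (dm f)" f h g] by (simp add: typing comp_ident_right)

lemma tensm_comp_fst_before:
  "\<lbrakk>f \<in> Arr; g \<in> Arr; h \<in> Arr; cd h = dm g\<rbrakk>
    \<Longrightarrow> tensm (cmp g h) f = cmp (tensm g (ident (cd f))) (tensm h f)"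
  using tensm_comp[of h g f "ident (cd f)"] by (simp add: typing comp_ident_left)

lemma tensm_comp_fst_after:
  "\<lbrakk>f \<in> Arr; g \<in> Arr; h \<in> Arr; cd h = dm g\<rbrakk>
    \<Longrightarrow> tensm (cmp g h) f = cmp (tensm g f) (tensm h (ident (dm f)))"
  using tensm_comp[of h g "ident (dm f)" f] by (simp add: typing comp_ident_right)

lemma tensm_fst_first:
  "\<lbrakk>f \<in> Arr; g \<in> Arr\<rbrakk> \<Longrightarrow> tensm f g = cmp (tensm (ident (cd f)) g) (tensm f (ident (dm g)))"
  using tensm_comp_snd_before[of f g "ident (dm g)"] by (simp add: typing comp_ident_right)

lemma tensm_snd_first:
  "\<lbrakk>f \<in> Arr; g \<in> Arr\<rbrakk> \<Longrightarrow> tensm f g = cmp (tensm f (ident (cd g))) (tensm (ident (dm f)) g)"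
  using tensm_comp_fst_before[of g f "ident (dm f)"] by (simp add: typing comp_ident_right)

lemma tensm_square_snd:
  assumes "cmp v1 h1 = cmp h1' v0" and "f \<in> Arr"
    and "h1 \<in> Arr" "h1' \<in> Arr" "v0 \<in> Arr" "v1 \<in> Arr" "cd h1 = dm v1" "cd v0 = dm h1'"
  shows "cmp (tensm (ident (cd f)) v1) (tensm f h1) = cmp (tensm f h1') (tensm (ident (dm f)) v0)"
  using assms tensm_comp_snd_before[of f v1 h1] tensm_comp_snd_after[of f h1' v0] by simp

lemma tensm_square_fst:
  assumes "cmp v1 h1 = cmp h1' v0" and "f \<in> Arr"
    and "h1 \<in> Arr" "h1' \<in> Arr" "v0 \<in> Arr" "v1 \<in> Arr" "cd h1 = dm v1" "cd v0 = dm h1'"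
  shows "cmp (tensm v1 (ident (cd f))) (tensm h1 f) = cmp (tensm h1' f) (tensm v0 (ident (dm f)))"
  using assms tensm_comp_fst_before[of f v1 h1] tensm_comp_fst_after[of f h1' v0] by simp

end

context pre_braiding
begin

lemmas sigma_typing = sigma_arr sigma_dom sigma_cod

lemma pre_braiding_subcategory:
  assumes "S \<subseteq> Arr"
    and "\<And>A. A \<in> Obj \<Longrightarrow> ident A \<in> S"
    and "\<And>f g. \<lbrakk>f \<in> S; g \<in> S; cd f = dm g\<rbrakk> \<Longrightarrow> cmp g f \<in> S"
    and "\<And>f g. \<lbrakk>f \<in> S; g \<in> S\<rbrakk> \<Longrightarrow> tensm f g \<in> S"
    and "\<And>A B. \<lbrakk>A \<in> Obj; B \<in> Obj\<rbrakk> \<Longrightarrow> \<sigma> A B \<in> S"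
  shows "pre_braiding Obj S dm cd cmp ident tens tensm unit \<sigma>"
proof (rule pre_braiding.intro)
  show "strict_monoidal_category Obj S dm cd cmp ident tens tensm unit"
    using assms(1-4) by (rule monoidal_subcategory)
  show "pre_braiding_axioms Obj S dm cd cmp ident tens tensm \<sigma>"
    using assms(1,5)
    by unfold_locales (auto intro: sigma_dom sigma_cod yang_baxter hexagon1 hexagon2)
qed

definition sigma_natural_fst :: "'m \<Rightarrow> 'o \<Rightarrow> bool" where
  "sigma_natural_fst f C \<longleftrightarrow>
     cmp (\<sigma> (cd f) C) (tensm f (ident C)) = cmp (tensm (ident C) f) (\<sigma> (dm f) C)"

definition sigma_natural_snd :: "'m \<Rightarrow> 'o \<Rightarrow> bool" where
  "sigma_natural_snd f C \<longleftrightarrow>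
     cmp (\<sigma> C (cd f)) (tensm (ident C) f) = cmp (tensm f (ident C)) (\<sigma> C (dm f))"

abbreviation Arr\<^sub>\<sigma> :: "'m set" where
  "Arr\<^sub>\<sigma> \<equiv> C_sigma_Arr Obj Arr dm cd cmp ident tensm \<sigma>"

lemma mem_Arr_sigma_iff:
  "f \<in> Arr\<^sub>\<sigma> \<longleftrightarrow> f \<in> Arr \<and> (\<forall>C \<in> Obj. sigma_natural_fst f C \<and> sigma_natural_snd f C)"
  unfolding C_sigma_Arr_def sigma_natural_fst_def sigma_natural_snd_def by auto

lemma sigma_natural_fst_ident:
  "\<lbrakk>A \<in> Obj; C \<in> Obj\<rbrakk> \<Longrightarrow> sigma_natural_fst (ident A) C"
  using comp_ident_left[of "\<sigma> A C"] comp_ident_right[of "\<sigma> A C"]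
  by (simp add: sigma_natural_fst_def typing sigma_typing tensm_ident)

lemma sigma_natural_snd_ident:
  "\<lbrakk>A \<in> Obj; C \<in> Obj\<rbrakk> \<Longrightarrow> sigma_natural_snd (ident A) C"
  using comp_ident_left[of "\<sigma> C A"] comp_ident_right[of "\<sigma> C A"]
  by (simp add: sigma_natural_snd_def typing sigma_typing tensm_ident)

lemma sigma_natural_fst_comp:
  assumes "f \<in> Arr" "g \<in> Arr" "cd f = dm g" "C \<in> Obj"
    and "sigma_natural_fst f C" "sigma_natural_fst g C"
  shows "sigma_natural_fst (cmp g f) C"
proof -
  from assms have sq_f:
      "cmp (\<sigma> (cd f) C) (tensm f (ident C)) = cmp (tensm (ident C) f) (\<sigma> (dm f) C)"
    and sq_g: "cmp (\<sigma> (cd g) C) (tensm g (ident C)) = cmp (tensm (ident C) g) (\<sigma> (cd f) C)"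
    by (simp_all add: sigma_natural_fst_def)
  have "cmp (\<sigma> (cd g) C) (cmp (tensm g (ident C)) (tensm f (ident C)))
      = cmp (cmp (tensm (ident C) g) (tensm (ident C) f)) (\<sigma> (dm f) C)"
    using sq_f sq_g by (rule paste_squares) (use assms in \<open>simp_all add: typing sigma_typing\<close>)
  with assms show ?thesis
    by (simp add: sigma_natural_fst_def typing tensm_comp_fst_before tensm_comp_snd_after)
qed

lemma sigma_natural_snd_comp:
  assumes "f \<in> Arr" "g \<in> Arr" "cd f = dm g" "C \<in> Obj"
    and "sigma_natural_snd f C" "sigma_natural_snd g C"
  shows "sigma_natural_snd (cmp g f) C"
proof -
  from assms have sq_f:
      "cmp (\<sigma> C (cd f)) (tensm (ident C) f) = cmp (tensm f (ident C)) (\<sigma> C (dm f))"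
    and sq_g: "cmp (\<sigma> C (cd g)) (tensm (ident C) g) = cmp (tensm g (ident C)) (\<sigma> C (cd f))"
    by (simp_all add: sigma_natural_snd_def)
  have "cmp (\<sigma> C (cd g)) (cmp (tensm (ident C) g) (tensm (ident C) f))
      = cmp (cmp (tensm g (ident C)) (tensm f (ident C))) (\<sigma> C (dm f))"
    using sq_f sq_g by (rule paste_squares) (use assms in \<open>simp_all add: typing sigma_typing\<close>)
  with assms show ?thesis
    by (simp add: sigma_natural_snd_def typing tensm_comp_fst_after tensm_comp_snd_before)
qed

lemma sigma_natural_fst_tensm:
  assumes f: "f \<in> Arr" and g: "g \<in> Arr" and C: "C \<in> Obj"
    and "sigma_natural_fst f C" "sigma_natural_fst g C"
  shows "sigma_natural_fst (tensm f g) C"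
proof -
  have sq_f: "cmp (\<sigma> (cd f) C) (tensm f (ident C)) = cmp (tensm (ident C) f) (\<sigma> (dm f) C)"
    and sq_g: "cmp (\<sigma> (cd g) C) (tensm g (ident C)) = cmp (tensm (ident C) g) (\<sigma> (dm g) C)"
    using assms by (simp_all add: sigma_natural_fst_def)
  have sq1: "cmp (tensm f (tensm (ident C) g)) (tensm (ident (dm f)) (\<sigma> (dm g) C))
      = cmp (tensm (ident (cd f)) (\<sigma> (cd g) C)) (tensm f (tensm g (ident C)))"
    using tensm_square_snd[OF sq_g f] f g C by (simp add: typing sigma_typing)
  have sq2: "cmp (tensm (ident C) (tensm f g)) (tensm (\<sigma> (dm f) C) (ident (dm g)))
      = cmp (tensm (\<sigma> (cd f) C) (ident (cd g))) (tensm f (tensm (ident C) g))"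
    using tensm_square_fst[OF sq_f g] f g C by (simp add: typing sigma_typing tensm_assoc)
  have "cmp (tensm (ident C) (tensm f g))
          (cmp (tensm (\<sigma> (dm f) C) (ident (dm g))) (tensm (ident (dm f)) (\<sigma> (dm g) C)))
      = cmp (cmp (tensm (\<sigma> (cd f) C) (ident (cd g))) (tensm (ident (cd f)) (\<sigma> (cd g) C)))
          (tensm f (tensm g (ident C)))"
    using sq1 sq2 by (rule paste_squares)
      (use f g C in \<open>simp_all add: typing sigma_typing tens_assoc\<close>)
  with f g C show ?thesis
    by (simp add: sigma_natural_fst_def typing sigma_typing hexagon1 tensm_assoc)
qed

lemma sigma_natural_snd_tensm:
  assumes f: "f \<in> Arr" and g: "g \<in> Arr" and C: "C \<in> Obj"
    and "sigma_natural_snd f C" "sigma_natural_snd g C"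
  shows "sigma_natural_snd (tensm f g) C"
proof -
  have sq_f: "cmp (\<sigma> C (cd f)) (tensm (ident C) f) = cmp (tensm f (ident C)) (\<sigma> C (dm f))"
    and sq_g: "cmp (\<sigma> C (cd g)) (tensm (ident C) g) = cmp (tensm g (ident C)) (\<sigma> C (dm g))"
    using assms by (simp_all add: sigma_natural_snd_def)
  have sq1: "cmp (tensm f (tensm (ident C) g)) (tensm (\<sigma> C (dm f)) (ident (dm g)))
      = cmp (tensm (\<sigma> C (cd f)) (ident (cd g))) (tensm (ident C) (tensm f g))"
    using tensm_square_fst[OF sq_f g] f g C by (simp add: typing sigma_typing tensm_assoc)
  have sq2: "cmp (tensm f (tensm g (ident C))) (tensm (ident (dm f)) (\<sigma> C (dm g)))
      = cmp (tensm (ident (cd f)) (\<sigma> C (cd g))) (tensm f (tensm (ident C) g))"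
    using tensm_square_snd[OF sq_g f] f g C by (simp add: typing sigma_typing)
  have "cmp (tensm f (tensm g (ident C)))
          (cmp (tensm (ident (dm f)) (\<sigma> C (dm g))) (tensm (\<sigma> C (dm f)) (ident (dm g))))
      = cmp (cmp (tensm (ident (cd f)) (\<sigma> C (cd g))) (tensm (\<sigma> C (cd f)) (ident (cd g))))
          (tensm (ident C) (tensm f g))"
    using sq1 sq2 by (rule paste_squares)
      (use f g C in \<open>simp_all add: typing sigma_typing tens_assoc\<close>)
  with f g C show ?thesis
    by (simp add: sigma_natural_snd_def typing sigma_typing hexagon2 tensm_assoc)
qed

lemma sigma_natural_fst_sigma:
  assumes "A \<in> Obj" "B \<in> Obj" "C \<in> Obj"
  shows "sigma_natural_fst (\<sigma> A B) C"
  using assms yang_baxter[OF assms]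
  by (simp add: sigma_natural_fst_def typing sigma_typing hexagon1 tens_assoc comp_assoc)

lemma sigma_natural_snd_sigma:
  assumes "A \<in> Obj" "B \<in> Obj" "C \<in> Obj"
  shows "sigma_natural_snd (\<sigma> A B) C"
  using assms yang_baxter[of C A B]
  by (simp add: sigma_natural_snd_def typing sigma_typing hexagon2 tens_assoc comp_assoc)

lemma sigma_natural:
  assumes f: "f \<in> Arr" and g: "g \<in> Arr"
    and "sigma_natural_fst f (dm g)" "sigma_natural_snd g (cd f)"
  shows "cmp (tensm g f) (\<sigma> (dm f) (dm g)) = cmp (\<sigma> (cd f) (cd g)) (tensm f g)"
proof -
  have sq_f: "cmp (\<sigma> (cd f) (dm g)) (tensm f (ident (dm g)))
      = cmp (tensm (ident (dm g)) f) (\<sigma> (dm f) (dm g))"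
    and sq_g: "cmp (\<sigma> (cd f) (cd g)) (tensm (ident (cd f)) g)
      = cmp (tensm g (ident (cd f))) (\<sigma> (cd f) (dm g))"
    using assms by (simp_all add: sigma_natural_fst_def sigma_natural_snd_def)
  have "cmp (\<sigma> (cd f) (cd g)) (cmp (tensm (ident (cd f)) g) (tensm f (ident (dm g))))
      = cmp (cmp (tensm g (ident (cd f))) (tensm (ident (dm g)) f)) (\<sigma> (dm f) (dm g))"
    using sq_f sq_g by (rule paste_squares) (use f g in \<open>simp_all add: typing sigma_typing\<close>)
  then show ?thesis
    by (simp add: tensm_fst_first[OF f g] tensm_snd_first[OF g f])
qed

lemma Arr_sigma_subset: "Arr\<^sub>\<sigma> \<subseteq> Arr"
  by (auto simp: mem_Arr_sigma_iff)

lemma ident_mem_Arr_sigma: "A \<in> Obj \<Longrightarrow> ident A \<in> Arr\<^sub>\<sigma>"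
  by (simp add: mem_Arr_sigma_iff ident_arr sigma_natural_fst_ident sigma_natural_snd_ident)

lemma comp_mem_Arr_sigma:
  "\<lbrakk>f \<in> Arr\<^sub>\<sigma>; g \<in> Arr\<^sub>\<sigma>; cd f = dm g\<rbrakk> \<Longrightarrow> cmp g f \<in> Arr\<^sub>\<sigma>"
  by (simp add: mem_Arr_sigma_iff comp_arr sigma_natural_fst_comp sigma_natural_snd_comp)

lemma tensm_mem_Arr_sigma: "\<lbrakk>f \<in> Arr\<^sub>\<sigma>; g \<in> Arr\<^sub>\<sigma>\<rbrakk> \<Longrightarrow> tensm f g \<in> Arr\<^sub>\<sigma>"
  by (simp add: mem_Arr_sigma_iff tensm_arr sigma_natural_fst_tensm sigma_natural_snd_tensm)

lemma sigma_mem_Arr_sigma: "\<lbrakk>A \<in> Obj; B \<in> Obj\<rbrakk> \<Longrightarrow> \<sigma> A B \<in> Arr\<^sub>\<sigma>"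
  by (simp add: mem_Arr_sigma_iff sigma_arr sigma_natural_fst_sigma sigma_natural_snd_sigma)

end

theorem proposition5p9:
  fixes Obj :: "'o set" and Arr :: "'m set"
    and dm :: "'m \<Rightarrow> 'o" and cd :: "'m \<Rightarrow> 'o"
    and cmp :: "'m \<Rightarrow> 'm \<Rightarrow> 'm" and ident :: "'o \<Rightarrow> 'm"
    and tens :: "'o \<Rightarrow> 'o \<Rightarrow> 'o" and tensm :: "'m \<Rightarrow> 'm \<Rightarrow> 'm" and unit :: 'o
    and \<sigma> :: "'o \<Rightarrow> 'o \<Rightarrow> 'm"
  assumes "pre_braiding Obj Arr dm cd cmp ident tens tensm unit \<sigma>"
  shows "braided_monoidal_category Obj (C_sigma_Arr Obj Arr dm cd cmp ident tensm \<sigma>)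
           dm cd cmp ident tens tensm unit \<sigma>"
proof -
  interpret pre_braiding Obj Arr dm cd cmp ident tens tensm unit \<sigma> by fact
  have "pre_braiding Obj Arr\<^sub>\<sigma> dm cd cmp ident tens tensm unit \<sigma>"
    using Arr_sigma_subset ident_mem_Arr_sigma comp_mem_Arr_sigma tensm_mem_Arr_sigma
      sigma_mem_Arr_sigma
    by (rule pre_braiding_subcategory)
  then show ?thesis
  proof (rule braided_monoidal_category.intro, unfold_locales)
    fix f g assume "f \<in> Arr\<^sub>\<sigma>" "g \<in> Arr\<^sub>\<sigma>"
    then show "cmp (tensm g f) (\<sigma> (dm f) (dm g)) = cmp (\<sigma> (cd f) (cd g)) (tensm f g)"
      by (auto simp: mem_Arr_sigma_iff typing intro: sigma_natural)
  qed
qed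

end
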